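(* Let $0\le q<\tfrac12$ and $p=1-q$. Let $X_1,X_2,\dots$ be i.i.d. letters in $\{S,H\}$ with $\mathbb{P}[X_i=S]=q$ and $\mathbb{P}[X_i=H]=p$. Define the random variable $L$ as follows: (i) if $X_1=H$, then $L=1$; (ii) if $X_1X_2=SH$, then $L=2$; (iii) if $X_1X_2=SS$, let $m\ge 3$ be the first index with $X_m=H$ and (number of $S$ among $X_1,\dots,X_m$) $-$ (number of $H$ among $X_1,\dots,X_m$) $=1$, and let $L$ be the number of letters $S$ among $X_1,\dots,X_m$. Then $$\mathbb{E}[L]=1+\frac{p^2q}{p-q}.$$
   Context: This models one attack cycle of the Selfish Mining strategy in Bitcoin: each newly validated block is found by the selfish miner (letter $S$, relative hashrate $q$) or by the honest miners (letter $H$, relative hashrate $p$), independently, and $L$ is the number of blocks added to the official blockchain during the attack cycle. *)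

theory Defs
  imports "HOL-Probability.Probability"
begin

text \<open>Letters are encoded as booleans: True = S (selfish miner), False = H (honest).
  A run X_1 X_2 ... is a stream, with X_i = w !! (i - 1).\<close>

definition nS :: "bool stream \<Rightarrow> nat \<Rightarrow> nat" where
  "nS w m = card {i. i < m \<and> w !! i}"

definition nH :: "bool stream \<Rightarrow> nat \<Rightarrow> nat" where
  "nH w m = card {i. i < m \<and> \<not> w !! i}"

definition stop_iii :: "bool stream \<Rightarrow> nat \<Rightarrow> bool" where
  "stop_iii w m \<longleftrightarrow> 3 \<le> m \<and> \<not> w !! (m - 1) \<and> int (nS w m) - int (nH w m) = 1"

text \<open>The random variable L (set to 0 on the null event where case (iii) never stops).\<close>
definition L_len :: "bool stream \<Rightarrow> nat" where
  "L_len w =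
     (if \<not> w !! 0 then 1
      else if \<not> w !! 1 then 2
      else if (\<exists>m. stop_iii w m) then nS w (LEAST m. stop_iii w m)
      else 0)"

end

theory Submission
  imports Defs
begin

text \<open>Read S as a step up and H as a step down. After the prefix SS the attack ends exactly when
  the walk started at height 1 first returns to 0, and L is 2 plus the number of up-steps of that
  excursion. For the walk started at height k, the absorption probability h k and the expected
  number c k of up-steps before absorption satisfy the first-step equations
  h (k+1) = q h (k+2) + p h k and c (k+1) = q (h (k+2) + c (k+2)) + p c k, with h 0 = 1, c 0 = 0.
  Since q < p, a nonnegative solution of the homogeneous equation that vanishes at 0 and grows at
  most linearly is identically 0 (its increments grow geometrically by the factor p/q). Applied to
  1 - h and to k g - c, with g = q/(p - q), this gives h = 1 and c k = k g; the linear bound on c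
  comes from truncating the walk after finitely many steps. Conditioning on the first two letters
  then gives E[L] = p + 2 q p + q^2 (2 + g).\<close>

lemma increments_growing_linearly_unbounded:
  fixes a :: "nat \<Rightarrow> real"
  assumes e: "0 < e" and a0: "a 0 = 0" and incr: "\<And>k. real k * e \<le> a (Suc k) - a k"
  obtains k where "real k * B < a k"
proof -
  have quadratic: "e * (real k * (real k - 1) / 2) \<le> a k" for k
  proof (induction k)
    case 0 then show ?case using a0 by simp
  next
    case (Suc k) then show ?case using incr[of k] by (simp add: algebra_simps)
  qed
  obtain N :: nat where N: "2 * B / e < real N" using reals_Archimedean2 by blast
  have "B < e * (real N / 2)" using N e by (simp add: field_simps)
  then have "real (Suc N) * B < real (Suc N) * (e * (real N / 2))"
    by (intro mult_strict_left_mono) simp_all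
  also have "\<dots> = e * (real (Suc N) * (real (Suc N) - 1) / 2)"
    by (simp add: algebra_simps)
  finally show ?thesis using quadratic[of "Suc N"] by (intro that[of "Suc N"]) linarith
qed

lemma biased_harmonic_linearly_bounded_eq_0:
  fixes a :: "nat \<Rightarrow> real" and q B :: real
  assumes q: "0 \<le> q" "q < 1/2" and a0: "a 0 = 0" and nonneg: "\<And>k. 0 \<le> a k"
    and bounded: "\<And>k. a k \<le> real k * B"
    and harmonic: "\<And>k. a (Suc k) = q * a (Suc (Suc k)) + (1 - q) * a k"
  shows "a k = 0"
proof (cases "q = 0")
  case True
  then have "a (Suc k) = a k" for k using harmonic[of k] by simp
  then show ?thesis using a0 by (induction k) auto
next
  case False
  define d where "d k = a (Suc k) - a k" for k
  define r where "r = (1 - q) / q"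
  have r: "1 < r" using q False by (simp add: r_def field_simps)
  have d_Suc: "d (Suc k) = r * d k" for k
    using harmonic[of k] q False by (simp add: d_def r_def field_simps)
  have "d 0 = 0"
  proof (rule ccontr)
    assume "d 0 \<noteq> 0"
    moreover have "0 \<le> d 0" using nonneg[of 1] a0 by (simp add: d_def)
    ultimately have d0: "0 < d 0" by simp
    define e where "e = (r - 1) * d 0"
    have e: "0 < e" using r d0 by (simp add: e_def)
    have growth: "d 0 + real k * e \<le> d k" for k
    proof (induction k)
      case 0 then show ?case by simp
    next
      case (Suc k)
      have "0 \<le> real k * e" using e by simp
      then have "d 0 \<le> d k" using Suc.IH by linarith
      then have "e \<le> (r - 1) * d k" using r by (simp add: e_def)
      then show ?case using Suc.IH d_Suc[of k] by (simp add: algebra_simps)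
    qed
    have "real k * e \<le> a (Suc k) - a k" for k
      using growth[of k] d0 by (simp add: d_def)
    then obtain k where "real k * B < a k"
      using increments_growing_linearly_unbounded[of e a] e a0 by blast
    with bounded[of k] show False by simp
  qed
  then have "d k = 0" for k by (induction k) (simp_all add: d_Suc)
  then show ?thesis using a0 by (induction k) (simp_all add: d_def)
qed

lemma nn_integral_bernoulli_stream:
  assumes q: "0 \<le> q" "q \<le> 1"
    and f[measurable]: "f \<in> borel_measurable (stream_space (measure_pmf (bernoulli_pmf q)))"
  shows "(\<integral>\<^sup>+w. f w \<partial>stream_space (measure_pmf (bernoulli_pmf q))) =
     ennreal q * (\<integral>\<^sup>+w. f (True ## w) \<partial>stream_space (measure_pmf (bernoulli_pmf q))) +
     ennreal (1 - q) * (\<integral>\<^sup>+w. f (False ## w) \<partial>stream_space (measure_pmf (bernoulli_pmf q)))"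
  by (subst prob_space.nn_integral_stream_space[OF prob_space_measure_pmf f],
      subst nn_integral_measure_pmf, subst nn_integral_count_space_finite)
    (auto simp: UNIV_bool q add.commute)

lemma ennreal_convex_combination:
  assumes "0 \<le> q" "q \<le> 1" "0 \<le> a" "0 \<le> b"
  shows "ennreal q * ennreal a + ennreal (1 - q) * ennreal b = ennreal (q * a + (1 - q) * b)"
  using assms by (simp add: ennreal_plus ennreal_mult)

primrec reaches_zero :: "nat \<Rightarrow> nat \<Rightarrow> bool stream \<Rightarrow> bool" where
  "reaches_zero 0 k w \<longleftrightarrow> k = 0"
| "reaches_zero (Suc n) k w \<longleftrightarrow>
     k = 0 \<or> reaches_zero n (if shd w then Suc k else k - 1) (stl w)"

primrec ups_before_zero :: "nat \<Rightarrow> nat \<Rightarrow> bool stream \<Rightarrow> nat" where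
  "ups_before_zero 0 k w = 0"
| "ups_before_zero (Suc n) k w =
     (if k = 0 then 0
      else if shd w then Suc (ups_before_zero n (Suc k) (stl w))
      else ups_before_zero n (k - 1) (stl w))"

definition absorbed :: "nat \<Rightarrow> bool stream \<Rightarrow> bool" where
  "absorbed k w \<longleftrightarrow> (\<exists>n. reaches_zero n k w)"

definition ups_to_zero :: "nat \<Rightarrow> bool stream \<Rightarrow> nat" where
  "ups_to_zero k w = (if absorbed k w then ups_before_zero (LEAST n. reaches_zero n k w) k w else 0)"

lemma ups_before_zero_stable:
  "reaches_zero n k w \<Longrightarrow> n \<le> m \<Longrightarrow> ups_before_zero m k w = ups_before_zero n k w"
proof (induction n arbitrary: k w m)
  case 0 then show ?case by (cases m) auto
next
  case (Suc n) then show ?case by (cases m) (auto split: if_splits)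
qed

lemma ups_before_zero_mono: "n \<le> m \<Longrightarrow> ups_before_zero n k w \<le> ups_before_zero m k w"
proof (induction n arbitrary: k w m)
  case 0 then show ?case by simp
next
  case (Suc n) then show ?case by (cases m) auto
qed

lemma ups_to_zero_eq: "reaches_zero n k w \<Longrightarrow> ups_to_zero k w = ups_before_zero n k w"
proof -
  assume n: "reaches_zero n k w"
  let ?l = "LEAST n. reaches_zero n k w"
  have "reaches_zero ?l k w" "?l \<le> n" using n by (auto intro: LeastI Least_le)
  then show ?thesis using n ups_before_zero_stable[of ?l k w n]
    by (auto simp: ups_to_zero_def absorbed_def)
qed

lemma ups_to_zero_not_absorbed: "\<not> absorbed k w \<Longrightarrow> ups_to_zero k w = 0"
  by (simp add: ups_to_zero_def)

lemma absorbed_0: "absorbed 0 w"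
  unfolding absorbed_def by (rule exI[of _ 0]) simp

lemma ups_to_zero_0: "ups_to_zero 0 w = 0"
  using ups_to_zero_eq[of 0 0 w] by simp

lemma absorbed_Cons: "absorbed (Suc j) (x ## w) \<longleftrightarrow> absorbed (if x then Suc (Suc j) else j) w"
proof
  assume "absorbed (Suc j) (x ## w)"
  then obtain n where "reaches_zero n (Suc j) (x ## w)" by (auto simp: absorbed_def)
  then show "absorbed (if x then Suc (Suc j) else j) w" by (cases n) (auto simp: absorbed_def)
next
  assume "absorbed (if x then Suc (Suc j) else j) w"
  then obtain n where "reaches_zero n (if x then Suc (Suc j) else j) w" by (auto simp: absorbed_def)
  then have "reaches_zero (Suc n) (Suc j) (x ## w)" by (cases x) auto
  then show "absorbed (Suc j) (x ## w)" unfolding absorbed_def by blast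
qed

lemma ups_to_zero_Cons:
  "ups_to_zero (Suc j) (x ## w) =
     (if x then (if absorbed (Suc (Suc j)) w then Suc (ups_to_zero (Suc (Suc j)) w) else 0)
      else ups_to_zero j w)"
proof (cases "absorbed (if x then Suc (Suc j) else j) w")
  case True
  then obtain n where n: "reaches_zero n (if x then Suc (Suc j) else j) w"
    by (auto simp: absorbed_def)
  then have "reaches_zero (Suc n) (Suc j) (x ## w)" by (cases x) auto
  then have "ups_to_zero (Suc j) (x ## w) = ups_before_zero (Suc n) (Suc j) (x ## w)"
    by (rule ups_to_zero_eq)
  then show ?thesis using n True by (auto simp: ups_to_zero_eq)
next
  case False
  then show ?thesis using absorbed_Cons[of j x w] by (auto simp: ups_to_zero_not_absorbed)
qed

lemma card_Collect_less_Suc: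
  "card {i. i < Suc m \<and> P i} = card {i. i < m \<and> P i} + (if P m then 1 else 0)"
proof -
  have "{i. i < Suc m \<and> P i} = {i. i < m \<and> P i} \<union> (if P m then {m} else {})"
    by (auto simp: less_Suc_eq)
  then show ?thesis by auto
qed

lemma nS_0 [simp]: "nS w 0 = 0"
  by (simp add: nS_def)

lemma nH_0 [simp]: "nH w 0 = 0"
  by (simp add: nH_def)

lemma nS_Suc: "nS w (Suc m) = nS w m + (if w !! m then 1 else 0)"
  unfolding nS_def by (rule card_Collect_less_Suc)

lemma nH_Suc: "nH w (Suc m) = nH w m + (if w !! m then 0 else 1)"
  unfolding nH_def by (subst card_Collect_less_Suc) simp

lemma nS_Cons: "nS (x ## w) (Suc m) = (if x then 1 else 0) + nS w m"
  by (induction m) (auto simp: nS_Suc)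

lemma nH_Cons: "nH (x ## w) (Suc m) = (if x then 0 else 1) + nH w m"
  by (induction m) (auto simp: nH_Suc)

definition walk_height :: "nat \<Rightarrow> bool stream \<Rightarrow> nat \<Rightarrow> int" where
  "walk_height k w m = int k + int (nS w m) - int (nH w m)"

lemma walk_height_0 [simp]: "walk_height k w 0 = int k"
  by (simp add: walk_height_def)

lemma walk_height_Suc: "walk_height k w (Suc m) = walk_height k w m + (if w !! m then 1 else -1)"
  by (simp add: walk_height_def nS_Suc nH_Suc)

lemma walk_height_Cons:
  "0 < k \<Longrightarrow> walk_height k (x ## w) (Suc m) = walk_height (if x then Suc k else k - 1) w m"
  by (simp add: walk_height_def nS_Cons nH_Cons of_nat_diff)

lemma first_zero_reaches_zero:
  assumes "walk_height k w m = 0" and "\<forall>i<m. walk_height k w i \<noteq> 0"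
  shows "reaches_zero m k w \<and> ups_before_zero m k w = nS w m"
  using assms
proof (induction m arbitrary: k w)
  case 0 then show ?case by simp
next
  case (Suc m)
  obtain x w' where w: "w = x ## w'" by (cases w)
  have k: "0 < k" using Suc.prems(2) by (cases k) auto
  let ?k = "if x then Suc k else k - 1"
  have "walk_height ?k w' m = 0" "\<forall>i<m. walk_height ?k w' i \<noteq> 0"
    using Suc.prems walk_height_Cons[OF k] w by auto
  then have "reaches_zero m ?k w' \<and> ups_before_zero m ?k w' = nS w' m" by (rule Suc.IH)
  then show ?case using w k by (auto simp: nS_Cons)
qed

lemma reaches_zero_walk_height_zero: "reaches_zero n k w \<Longrightarrow> \<exists>m\<le>n. walk_height k w m = 0"
proof (induction n arbitrary: k w)
  case 0 then show ?case by auto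
next
  case (Suc n)
  obtain x w' where w: "w = x ## w'" by (cases w)
  show ?case
  proof (cases "k = 0")
    case True then show ?thesis by (intro exI[of _ 0]) auto
  next
    case False
    let ?k = "if x then Suc k else k - 1"
    have "reaches_zero n ?k w'" using Suc.prems w False by auto
    then obtain m where "m \<le> n" "walk_height ?k w' m = 0" using Suc.IH by blast
    then show ?thesis using walk_height_Cons[of k x w' m] False w by (intro exI[of _ "Suc m"]) auto
  qed
qed

lemma zero_before_negative_walk_height: "walk_height k w j < 0 \<Longrightarrow> \<exists>i<j. walk_height k w i = 0"
proof (induction j)
  case 0 then show ?case by simp
next
  case (Suc j)
  show ?case
  proof (cases "walk_height k w j < 0")
    case True then show ?thesis using Suc.IH less_SucI by blast
  next
    case False
    then have "walk_height k w j = 0" using Suc.prems walk_height_Suc[of k w j] by (auto split: if_splits)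
    then show ?thesis by blast
  qed
qed

lemma stop_iii_SS_iff:
  "stop_iii (True ## True ## w) m \<longleftrightarrow>
     (\<exists>j. m = Suc (Suc j) \<and> 1 \<le> j \<and> \<not> w !! (j - 1) \<and> walk_height 1 w j = 0)"
proof
  assume stop: "stop_iii (True ## True ## w) m"
  then obtain j' where "m = 3 + j'"
    unfolding stop_iii_def using le_Suc_ex by blast
  then have "m = Suc (Suc (Suc j'))" by simp
  then show "\<exists>j. m = Suc (Suc j) \<and> 1 \<le> j \<and> \<not> w !! (j - 1) \<and> walk_height 1 w j = 0"
    using stop unfolding stop_iii_def walk_height_def by (auto simp: nS_Cons nH_Cons)
next
  assume "\<exists>j. m = Suc (Suc j) \<and> 1 \<le> j \<and> \<not> w !! (j - 1) \<and> walk_height 1 w j = 0"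
  then obtain j where j: "m = Suc (Suc j)" "1 \<le> j" "\<not> w !! (j - 1)" "walk_height 1 w j = 0"
    by blast
  then obtain j' where "j = Suc j'" by (cases j) auto
  with j show "stop_iii (True ## True ## w) m"
    unfolding stop_iii_def walk_height_def by (auto simp: nS_Cons nH_Cons)
qed

lemma L_len_SS:
  "L_len (True ## True ## w) = (if absorbed 1 w then 2 + ups_to_zero 1 w else 0)"
proof (cases "\<exists>j. walk_height 1 w j = 0")
  case True
  define j0 where "j0 = (LEAST j. walk_height 1 w j = 0)"
  have zero: "walk_height 1 w j0 = 0" using True unfolding j0_def by (rule LeastI_ex)
  have before: "walk_height 1 w i \<noteq> 0" if "i < j0" for i
    using that unfolding j0_def by (rule not_less_Least)
  obtain j' where j': "j0 = Suc j'" using zero by (cases j0) auto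
  have down: "\<not> w !! j'"
  proof
    assume "w !! j'"
    then have "walk_height 1 w j' < 0" using zero j' walk_height_Suc[of 1 w j'] by simp
    then show False using zero_before_negative_walk_height before j' by fastforce
  qed
  have stop: "stop_iii (True ## True ## w) (Suc (Suc j0))"
    using stop_iii_SS_iff down zero j' by auto
  have "Suc (Suc j0) \<le> m" if "stop_iii (True ## True ## w) m" for m
    using that before by (auto simp: stop_iii_SS_iff not_less[symmetric])
  with stop have least: "(LEAST m. stop_iii (True ## True ## w) m) = Suc (Suc j0)"
    by (intro Least_equality) auto
  have "reaches_zero j0 1 w" "ups_before_zero j0 1 w = nS w j0"
    using first_zero_reaches_zero[of 1 w j0] zero before by auto
  then have "absorbed 1 w" "ups_to_zero 1 w = nS w j0"
    by (auto simp: absorbed_def ups_to_zero_eq)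
  then show ?thesis using stop least by (auto simp: L_len_def nS_Cons)
next
  case False
  then have "\<not> absorbed 1 w" unfolding absorbed_def using reaches_zero_walk_height_zero by blast
  moreover have "\<not> stop_iii (True ## True ## w) m" for m using False stop_iii_SS_iff by blast
  ultimately show ?thesis unfolding L_len_def by auto
qed

lemma L_len_eq:
  "L_len w =
     (if \<not> shd w then 1 else if \<not> shd (stl w) then 2
      else if absorbed 1 (stl (stl w)) then 2 + ups_to_zero 1 (stl (stl w)) else 0)"
proof -
  obtain x y w' where w: "w = x ## y ## w'" by (metis stream.collapse)
  show ?thesis unfolding w by (cases x; cases y) (simp_all add: L_len_SS, simp_all add: L_len_def)
qed

context
  fixes P :: "bool pmf"
begin

lemma measurable_shd_pmf [measurable]:
  "shd \<in> measurable (stream_space (measure_pmf P)) (count_space UNIV)"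
  using measurable_shd[of "measure_pmf P"] by simp

lemma measurable_reaches_zero [measurable]:
  "(\<lambda>w. reaches_zero n k w) \<in> measurable (stream_space (measure_pmf P)) (count_space UNIV)"
proof (induction n arbitrary: k)
  case 0 show ?case by simp
next
  case (Suc n)
  note Suc.IH [measurable]
  show ?case by simp
qed

lemma measurable_ups_before_zero [measurable]:
  "(\<lambda>w. ups_before_zero n k w) \<in> measurable (stream_space (measure_pmf P)) (count_space UNIV)"
proof (induction n arbitrary: k)
  case 0 show ?case by simp
next
  case (Suc n)
  note Suc.IH [measurable]
  show ?case by simp
qed

lemma measurable_absorbed [measurable]:
  "(\<lambda>w. absorbed k w) \<in> measurable (stream_space (measure_pmf P)) (count_space UNIV)"
  unfolding absorbed_def by measurable

lemma measurable_ups_to_zero [measurable]: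
  "(\<lambda>w. ups_to_zero k w) \<in> measurable (stream_space (measure_pmf P)) (count_space UNIV)"
  unfolding ups_to_zero_def by measurable

lemma measurable_L_len [measurable]:
  "L_len \<in> measurable (stream_space (measure_pmf P)) (count_space UNIV)"
  unfolding L_len_eq[abs_def] by measurable

end

context
  fixes q :: real
  assumes q_nonneg: "0 \<le> q" and q_less_half: "q < 1/2"
begin

abbreviation \<Omega> :: "bool stream measure" where
  "\<Omega> \<equiv> stream_space (measure_pmf (bernoulli_pmf q))"

lemma q_le_1: "q \<le> 1"
  using q_less_half by simp

lemma emeasure_space_\<Omega> [simp]: "emeasure \<Omega> (space \<Omega>) = 1"
  by (rule prob_space.emeasure_space_1[OF prob_space.prob_space_stream_space[OF prob_space_measure_pmf]])

definition absorption_prob :: "nat \<Rightarrow> ennreal" where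
  "absorption_prob k = (\<integral>\<^sup>+w. (if absorbed k w then 1 else 0) \<partial>\<Omega>)"

definition expected_ups :: "nat \<Rightarrow> ennreal" where
  "expected_ups k = (\<integral>\<^sup>+w. ennreal (ups_to_zero k w) \<partial>\<Omega>)"

definition expected_ups_within :: "nat \<Rightarrow> nat \<Rightarrow> ennreal" where
  "expected_ups_within n k = (\<integral>\<^sup>+w. ennreal (ups_before_zero n k w) \<partial>\<Omega>)"

definition mean_ups :: real where
  "mean_ups = q / (1 - 2 * q)"

lemma mean_ups_nonneg: "0 \<le> mean_ups"
  using q_nonneg q_less_half by (simp add: mean_ups_def)

lemma mean_ups_balance: "mean_ups * (1 - 2 * q) = q"
  using q_less_half by (simp add: mean_ups_def)

lemma absorption_prob_0: "absorption_prob 0 = 1"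
  by (simp add: absorption_prob_def absorbed_0)

lemma absorption_prob_Suc:
  "absorption_prob (Suc j) =
     ennreal q * absorption_prob (Suc (Suc j)) + ennreal (1 - q) * absorption_prob j"
  unfolding absorption_prob_def
  by (subst nn_integral_bernoulli_stream[OF q_nonneg q_le_1]) (auto simp: absorbed_Cons)

lemma absorption_prob_le_1: "absorption_prob k \<le> 1"
proof -
  have "absorption_prob k \<le> (\<integral>\<^sup>+w. 1 \<partial>\<Omega>)"
    unfolding absorption_prob_def by (rule nn_integral_mono) auto
  then show ?thesis by simp
qed

lemma expected_ups_0: "expected_ups 0 = 0"
  by (simp add: expected_ups_def ups_to_zero_0)

lemma expected_ups_Suc:
  "expected_ups (Suc j) =
     ennreal q * (absorption_prob (Suc (Suc j)) + expected_ups (Suc (Suc j)))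
     + ennreal (1 - q) * expected_ups j"
proof -
  have up: "ennreal (ups_to_zero (Suc j) (True ## w)) =
      (if absorbed (Suc (Suc j)) w then 1 else 0) + ennreal (ups_to_zero (Suc (Suc j)) w)" for w
    by (auto simp: ups_to_zero_Cons ups_to_zero_not_absorbed ennreal_plus[symmetric] add.commute)
  have "(\<integral>\<^sup>+w. ennreal (ups_to_zero (Suc j) (True ## w)) \<partial>\<Omega>) =
      absorption_prob (Suc (Suc j)) + expected_ups (Suc (Suc j))"
    unfolding up absorption_prob_def expected_ups_def by (rule nn_integral_add) auto
  then show ?thesis
    unfolding expected_ups_def
    by (subst nn_integral_bernoulli_stream[OF q_nonneg q_le_1]) (auto simp: ups_to_zero_Cons)
qed

lemma expected_ups_within_Suc:
  "expected_ups_within (Suc n) (Suc j) =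
     ennreal q * (1 + expected_ups_within n (Suc (Suc j))) + ennreal (1 - q) * expected_ups_within n j"
proof -
  have "(\<integral>\<^sup>+w. 1 + ennreal (ups_before_zero n (Suc (Suc j)) w) \<partial>\<Omega>) =
      1 + expected_ups_within n (Suc (Suc j))"
    unfolding expected_ups_within_def by (subst nn_integral_add) auto
  then show ?thesis
    unfolding expected_ups_within_def[of "Suc n"]
    by (subst nn_integral_bernoulli_stream[OF q_nonneg q_le_1]) (auto simp: expected_ups_within_def)
qed

lemma expected_ups_within_le: "expected_ups_within n k \<le> ennreal (real k * mean_ups)"
proof (induction n arbitrary: k)
  case 0 then show ?case by (simp add: expected_ups_within_def)
next
  case (Suc n)
  show ?case
  proof (cases k)
    case 0 then show ?thesis by (simp add: expected_ups_within_def)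
  next
    case (Suc j)
    have "expected_ups_within (Suc n) k \<le>
        ennreal q * (1 + ennreal (real (Suc (Suc j)) * mean_ups)) + ennreal (1 - q) * ennreal (real j * mean_ups)"
      unfolding Suc expected_ups_within_Suc by (intro add_mono mult_left_mono Suc.IH) auto
    also have "\<dots> = ennreal (q * (1 + real (Suc (Suc j)) * mean_ups) + (1 - q) * (real j * mean_ups))"
      using mean_ups_nonneg q_nonneg q_le_1 by (simp add: ennreal_plus ennreal_mult)
    also have "q * (1 + real (Suc (Suc j)) * mean_ups) + (1 - q) * (real j * mean_ups) = real k * mean_ups"
      using mean_ups_balance unfolding Suc by (simp add: algebra_simps)
    finally show ?thesis .
  qed
qed

lemma expected_ups_le: "expected_ups k \<le> ennreal (real k * mean_ups)"
proof -
  have "ennreal (ups_to_zero k w) \<le> (SUP n. ennreal (ups_before_zero n k w))" for w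
  proof (cases "absorbed k w")
    case True
    then obtain n where "reaches_zero n k w" by (auto simp: absorbed_def)
    then show ?thesis by (auto simp: ups_to_zero_eq intro: SUP_upper2)
  qed (simp add: ups_to_zero_not_absorbed)
  then have "expected_ups k \<le> (\<integral>\<^sup>+w. (SUP n. ennreal (ups_before_zero n k w)) \<partial>\<Omega>)"
    unfolding expected_ups_def by (rule nn_integral_mono)
  also have "\<dots> = (SUP n. expected_ups_within n k)"
    unfolding expected_ups_within_def
    by (rule nn_integral_monotone_convergence_SUP)
      (auto simp: incseq_def le_fun_def intro!: ups_before_zero_mono)
  also have "\<dots> \<le> ennreal (real k * mean_ups)"
    by (rule SUP_least) (rule expected_ups_within_le)
  finally show ?thesis .
qed

lemma absorption_prob_eq_1: "absorption_prob k = 1"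
proof -
  define h where "h k = enn2real (absorption_prob k)" for k
  have h: "absorption_prob k = ennreal (h k)" for k
    using le_less_trans[OF absorption_prob_le_1 ennreal_one_less_top] by (simp add: h_def less_top)
  have h_le_1: "h k \<le> 1" for k
    using absorption_prob_le_1[of k] by (simp add: h ennreal_le_1)
  have h_nonneg: "0 \<le> h k" for k
    by (simp add: h_def)
  have h_Suc: "h (Suc j) = q * h (Suc (Suc j)) + (1 - q) * h j" for j
  proof -
    have "ennreal (h (Suc j)) = ennreal (q * h (Suc (Suc j)) + (1 - q) * h j)"
      using absorption_prob_Suc[of j] unfolding h
      by (simp add: ennreal_convex_combination q_nonneg q_le_1 h_nonneg)
    then show ?thesis using q_nonneg q_le_1 h_nonneg by (subst (asm) ennreal_inj) auto
  qed
  have "1 - h k = 0"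
  proof (rule biased_harmonic_linearly_bounded_eq_0[OF q_nonneg q_less_half, where B = 1])
    show "1 - h 0 = 0" using absorption_prob_0 h[of 0] by simp
    show "0 \<le> 1 - h k" for k using h_le_1[of k] by simp
    show "1 - h k \<le> real k * 1" for k using h_nonneg[of k] \<open>1 - h 0 = 0\<close> by (cases k) auto
    show "1 - h (Suc k) = q * (1 - h (Suc (Suc k))) + (1 - q) * (1 - h k)" for k
      using h_Suc[of k] by (simp add: algebra_simps)
  qed
  then show ?thesis using h[of k] by simp
qed

lemma expected_ups_eq: "expected_ups k = ennreal (real k * mean_ups)"
proof -
  define c where "c k = enn2real (expected_ups k)" for k
  have c: "expected_ups k = ennreal (c k)" for k
    using le_less_trans[OF expected_ups_le ennreal_less_top] by (simp add: c_def less_top)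
  have c_nonneg: "0 \<le> c k" for k
    by (simp add: c_def)
  have c_le: "c k \<le> real k * mean_ups" for k
    using expected_ups_le[of k] mean_ups_nonneg by (simp add: c ennreal_le_iff)
  have c_Suc: "c (Suc j) = q * (1 + c (Suc (Suc j))) + (1 - q) * c j" for j
  proof -
    have "ennreal (c (Suc j)) = ennreal (q * (1 + c (Suc (Suc j))) + (1 - q) * c j)"
      using expected_ups_Suc[of j] c_nonneg
        ennreal_convex_combination[OF q_nonneg q_le_1, of "1 + c (Suc (Suc j))" "c j"]
      unfolding c absorption_prob_eq_1 by (simp add: ennreal_plus)
    then show ?thesis using q_nonneg q_le_1 c_nonneg by (subst (asm) ennreal_inj) auto
  qed
  have "real k * mean_ups - c k = 0"
  proof (rule biased_harmonic_linearly_bounded_eq_0[OF q_nonneg q_less_half, where B = mean_ups])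
    show "real 0 * mean_ups - c 0 = 0" using expected_ups_0 c[of 0] c_nonneg[of 0] by simp
    show "0 \<le> real k * mean_ups - c k" for k using c_le[of k] by simp
    show "real k * mean_ups - c k \<le> real k * mean_ups" for k using c_nonneg[of k] by simp
    show "real (Suc k) * mean_ups - c (Suc k) =
        q * (real (Suc (Suc k)) * mean_ups - c (Suc (Suc k))) + (1 - q) * (real k * mean_ups - c k)"
      for k using c_Suc[of k] mean_ups_balance by (simp add: algebra_simps)
  qed
  then show ?thesis using c[of k] by simp
qed

lemma nn_integral_L_len:
  "(\<integral>\<^sup>+w. ennreal (L_len w) \<partial>\<Omega>) = ennreal (q * (q * (2 + mean_ups) + (1 - q) * 2) + (1 - q))"
proof -
  have "(\<integral>\<^sup>+w. ennreal (L_len (True ## True ## w)) \<partial>\<Omega>) =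
      (\<integral>\<^sup>+w. 2 * (if absorbed 1 w then 1 else 0) + ennreal (ups_to_zero 1 w) \<partial>\<Omega>)"
    by (rule nn_integral_cong)
      (auto simp: L_len_SS ups_to_zero_not_absorbed ennreal_plus[symmetric])
  also have "\<dots> = 2 * absorption_prob 1 + expected_ups 1"
    unfolding absorption_prob_def expected_ups_def
    by (subst nn_integral_add) (auto simp: nn_integral_cmult)
  also have "\<dots> = ennreal (2 + mean_ups)"
    using mean_ups_nonneg by (simp add: absorption_prob_eq_1 expected_ups_eq ennreal_plus)
  finally have SS: "(\<integral>\<^sup>+w. ennreal (L_len (True ## True ## w)) \<partial>\<Omega>) = ennreal (2 + mean_ups)" .
  have SH: "(\<integral>\<^sup>+w. ennreal (L_len (True ## False ## w)) \<partial>\<Omega>) = ennreal 2"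
    by (simp add: L_len_def del: ennreal_numeral)
  have H: "(\<integral>\<^sup>+w. ennreal (L_len (False ## w)) \<partial>\<Omega>) = ennreal 1"
    by (simp add: L_len_def)
  have "(\<integral>\<^sup>+w. ennreal (L_len (True ## w)) \<partial>\<Omega>) =
      ennreal q * (\<integral>\<^sup>+w. ennreal (L_len (True ## True ## w)) \<partial>\<Omega>)
      + ennreal (1 - q) * (\<integral>\<^sup>+w. ennreal (L_len (True ## False ## w)) \<partial>\<Omega>)"
    by (rule nn_integral_bernoulli_stream[OF q_nonneg q_le_1]) measurable
  also have "\<dots> = ennreal (q * (2 + mean_ups) + (1 - q) * 2)"
    unfolding SS SH using mean_ups_nonneg
    by (intro ennreal_convex_combination q_nonneg q_le_1) simp_all
  finally have S: "(\<integral>\<^sup>+w. ennreal (L_len (True ## w)) \<partial>\<Omega>) =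
      ennreal (q * (2 + mean_ups) + (1 - q) * 2)" .
  have "(\<integral>\<^sup>+w. ennreal (L_len w) \<partial>\<Omega>) =
      ennreal q * (\<integral>\<^sup>+w. ennreal (L_len (True ## w)) \<partial>\<Omega>)
      + ennreal (1 - q) * (\<integral>\<^sup>+w. ennreal (L_len (False ## w)) \<partial>\<Omega>)"
    by (rule nn_integral_bernoulli_stream[OF q_nonneg q_le_1]) measurable
  also have "\<dots> = ennreal (q * (q * (2 + mean_ups) + (1 - q) * 2) + (1 - q) * 1)"
    unfolding S H using mean_ups_nonneg q_nonneg q_le_1
    by (intro ennreal_convex_combination q_nonneg q_le_1) simp_all
  finally show ?thesis by simp
qed

end

theorem mainTheorem2:
  fixes q p :: real
  assumes "0 \<le> q" and "q < 1/2" and "p = 1 - q"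
  shows "(\<integral>\<^sup>+ w. ennreal (real (L_len w)) \<partial>(stream_space (measure_pmf (bernoulli_pmf q))))
           = ennreal (1 + p^2 * q / (p - q))"
proof -
  have closed_form: "q * (q * (2 + mean_ups q) + (1 - q) * 2) + (1 - q) = 1 + p^2 * q / (p - q)"
    using assms(1,2) unfolding assms(3) by (simp add: mean_ups_def field_simps power2_eq_square)
  show ?thesis using nn_integral_L_len[OF assms(1,2)] unfolding closed_form .
qed

end
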